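(* Let $n\in\{2,4,8\}$ and $V_0=\{v\in\{-1,1\}^n : v_1=1,\ \sum_i v_i=0\}$. Then there exist signs $\varepsilon_v\in\{-1,1\}$, $v\in V_0$, and a vector $w\in\mathbb{Z}^n$ with $w_i\ge -1$ for all $i$, such that $\sum_{v\in V_0}\varepsilon_v v=w$. *)

theory Defs
  imports Main
begin

text \<open>Vectors in {-1,1}^n are represented as functions nat => int, with coordinates
  indexed 1..n and value 0 outside {1..n} (so that the set is finite).\<close>

definition V0 :: "nat \<Rightarrow> (nat \<Rightarrow> int) set" where
  "V0 n = {v. (\<forall>i\<in>{1..n}. v i = -1 \<or> v i = 1) \<and> (\<forall>i. i \<notin> {1..n} \<longrightarrow> v i = 0)
              \<and> v 1 = 1 \<and> (\<Sum>i\<in>{1..n}. v i) = 0}"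

end

theory Submission
  imports Defs
begin

text \<open>A vector of \<open>V0 n\<close> is determined by its list of
  coordinates, which identifies \<open>V0 n\<close> with the balanced \<open>\<plusminus>1\<close>-lists of length \<open>n\<close> starting
  with \<open>1\<close>; this turns the coordinate sums into sums over a computable set of lists. For
  \<open>n = 2\<close> and \<open>n = 4\<close> all signs \<open>+1\<close> already work, with sums \<open>(1, -1)\<close> and \<open>(3, -1, -1, -1)\<close>;
  for \<open>n = 8\<close> all signs \<open>+1\<close> give \<open>(35, -5, \<dots>, -5)\<close>, and negating the 18 vectors of an
  explicit table gives \<open>(-1, 3, -1, -1, -1, 3, -1, -1)\<close>.\<close>

definition coords :: "nat \<Rightarrow> (nat \<Rightarrow> int) \<Rightarrow> int list" where
  "coords n v = map v [1..<Suc n]"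

definition balanced_sign_lists :: "nat \<Rightarrow> int list set" where
  "balanced_sign_lists n =
     set (filter (\<lambda>xs. hd xs = 1 \<and> sum_list xs = 0) (List.n_lists n [-1, 1]))"

lemma length_coords [simp]: "length (coords n v) = n"
  by (simp add: coords_def)

lemma nth_coords: "i \<in> {1..n} \<Longrightarrow> coords n v ! (i - 1) = v i"
  by (auto simp del: upt_Suc simp: coords_def nth_map_upt)

lemma hd_coords: "n \<ge> 1 \<Longrightarrow> hd (coords n v) = v 1"
  by (simp add: coords_def hd_map upt_rec)

lemma sum_list_coords: "sum_list (coords n v) = (\<Sum>i\<in>{1..n}. v i)"
  by (simp del: upt_Suc add: coords_def interv_sum_list_conv_sum_set_nat
      atLeastLessThanSuc_atLeastAtMost)

lemma set_coords: "set (coords n v) = v ` {1..n}"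
  by (simp del: upt_Suc add: coords_def atLeastLessThanSuc_atLeastAtMost)

lemma inj_on_coords_V0: "inj_on (coords n) (V0 n)"
proof
  fix u v assume u: "u \<in> V0 n" and v: "v \<in> V0 n" and eq: "coords n u = coords n v"
  show "u = v"
  proof
    fix i
    show "u i = v i"
    proof (cases "i \<in> {1..n}")
      case True
      then show ?thesis using eq nth_coords by metis
    next
      case False
      then show ?thesis using u v by (simp add: V0_def)
    qed
  qed
qed

lemma coords_V0_subset:
  assumes "n \<ge> 1"
  shows "coords n ` V0 n \<subseteq> balanced_sign_lists n"
proof
  fix xs assume "xs \<in> coords n ` V0 n"
  then obtain v where v: "v \<in> V0 n" and xs: "xs = coords n v" by blast
  have "set xs \<subseteq> {-1, 1}" using v by (auto simp: xs set_coords V0_def)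
  then show "xs \<in> balanced_sign_lists n"
    using v assms
    by (auto simp: balanced_sign_lists_def set_n_lists xs hd_coords sum_list_coords V0_def)
qed

lemma balanced_sign_lists_subset:
  assumes "n \<ge> 1"
  shows "balanced_sign_lists n \<subseteq> coords n ` V0 n"
proof
  fix xs assume "xs \<in> balanced_sign_lists n"
  then have len: "length xs = n" and signs: "set xs \<subseteq> {-1, 1}"
    and head: "hd xs = 1" and balanced: "sum_list xs = 0"
    by (auto simp: balanced_sign_lists_def set_n_lists)
  define v where "v = (\<lambda>i. if i \<in> {1..n} then xs ! (i - 1) else 0)"
  have xs: "coords n v = xs"
    by (rule nth_equalityI) (auto simp del: upt_Suc simp: len v_def coords_def nth_map_upt)
  have "v i = -1 \<or> v i = 1" if "i \<in> {1..n}" for i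
  proof -
    have "xs ! (i - 1) \<in> set xs" using that len by auto
    then show ?thesis using that signs by (auto simp: v_def)
  qed
  moreover have "v 1 = 1"
    using head hd_coords[OF assms, of v] by (simp add: xs)
  moreover have "(\<Sum>i\<in>{1..n}. v i) = 0"
    using balanced sum_list_coords[of n v] by (simp add: xs)
  ultimately have "v \<in> V0 n" by (simp add: V0_def v_def)
  then show "xs \<in> coords n ` V0 n" using xs by blast
qed

lemma bij_betw_coords_V0:
  "n \<ge> 1 \<Longrightarrow> bij_betw (coords n) (V0 n) (balanced_sign_lists n)"
  using inj_on_coords_V0 coords_V0_subset balanced_sign_lists_subset
  by (simp add: bij_betw_def subset_antisym)

lemma sum_V0_conv_balanced_sign_lists:
  "n \<ge> 1 \<Longrightarrow> (\<Sum>v\<in>V0 n. f (coords n v)) = (\<Sum>xs\<in>balanced_sign_lists n. f xs)"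
  by (rule sum.reindex_bij_betw[OF bij_betw_coords_V0])

text \<open>The table consists of lists of length 8 only, so for \<open>n < 8\<close> every sign is \<open>+1\<close>.\<close>

definition negated :: "int list set" where
  "negated = set
    [[1, -1, -1, -1, -1, 1, 1, 1], [1, -1, -1, -1, 1, 1, 1, -1], [1, -1, -1, 1, -1, 1, 1, -1],
     [1, -1, -1, 1, 1, -1, -1, 1], [1, -1, -1, 1, 1, -1, 1, -1], [1, -1, 1, -1, -1, 1, -1, 1],
     [1, -1, 1, -1, 1, -1, -1, 1], [1, -1, 1, -1, 1, -1, 1, -1], [1, -1, 1, 1, -1, -1, -1, 1],
     [1, -1, 1, 1, -1, 1, -1, -1], [1, -1, 1, 1, 1, -1, -1, -1], [1, 1, -1, -1, -1, -1, 1, 1],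
     [1, 1, -1, -1, -1, 1, -1, 1], [1, 1, -1, -1, 1, -1, 1, -1], [1, 1, -1, -1, 1, 1, -1, -1],
     [1, 1, -1, 1, -1, -1, -1, 1], [1, 1, 1, -1, -1, -1, 1, -1], [1, 1, 1, 1, -1, -1, -1, -1]]"

definition sign :: "int list \<Rightarrow> int" where
  "sign xs = (if xs \<in> negated then -1 else 1)"

definition signed_coordinate_sum :: "nat \<Rightarrow> nat \<Rightarrow> int" where
  "signed_coordinate_sum n j = (\<Sum>xs\<in>balanced_sign_lists n. sign xs * xs ! j)"

lemma signed_coordinate_sums:
  "map (signed_coordinate_sum 2) [0..<2] = [1, -1]"
  "map (signed_coordinate_sum 4) [0..<4] = [3, -1, -1, -1]"
  "map (signed_coordinate_sum 8) [0..<8] = [-1, 3, -1, -1, -1, 3, -1, -1]"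
  by code_simp+

lemma signed_coordinate_sum_ge:
  assumes "n \<in> {2, 4, 8}" and "j < n"
  shows "signed_coordinate_sum n j \<ge> -1"
proof -
  have "signed_coordinate_sum n j \<in> set (map (signed_coordinate_sum n) [0..<n])"
    using assms(2) by simp
  with assms(1) show ?thesis
    by (auto simp only: signed_coordinate_sums insert_iff empty_iff list.set)
qed

theorem lemmaA2:
  fixes n :: nat
  assumes "n \<in> {2, 4, 8}"
  shows "\<exists>\<epsilon> :: (nat \<Rightarrow> int) \<Rightarrow> int. (\<forall>v\<in>V0 n. \<epsilon> v = -1 \<or> \<epsilon> v = 1) \<and>
           (\<exists>w :: nat \<Rightarrow> int. (\<forall>i\<in>{1..n}. w i \<ge> -1) \<and>
              (\<forall>i\<in>{1..n}. (\<Sum>v\<in>V0 n. \<epsilon> v * v i) = w i))"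
proof -
  define \<epsilon> where "\<epsilon> v = sign (coords n v)" for v
  have "(\<Sum>v\<in>V0 n. \<epsilon> v * v i) = signed_coordinate_sum n (i - 1)" if "i \<in> {1..n}" for i
  proof -
    have "(\<Sum>v\<in>V0 n. \<epsilon> v * v i) = (\<Sum>v\<in>V0 n. sign (coords n v) * coords n v ! (i - 1))"
      by (intro sum.cong refl) (simp only: \<epsilon>_def nth_coords[OF that])
    also have "\<dots> = signed_coordinate_sum n (i - 1)"
      unfolding signed_coordinate_sum_def using that by (intro sum_V0_conv_balanced_sign_lists) simp
    finally show ?thesis .
  qed
  moreover have "signed_coordinate_sum n (i - 1) \<ge> -1" if "i \<in> {1..n}" for i
    using that assms by (intro signed_coordinate_sum_ge) auto
  moreover have "\<epsilon> v = -1 \<or> \<epsilon> v = 1" for v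
    by (simp add: \<epsilon>_def sign_def)
  ultimately show ?thesis
    by (intro exI[of _ \<epsilon>] conjI exI[of _ "\<lambda>i. \<Sum>v\<in>V0 n. \<epsilon> v * v i"]) auto
qed

end
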